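(* Let $\alpha\in(1,2)$, $\sigma=1-\alpha/2$, $T>0$, $N$ a positive integer and $\tau=T/N$, and let the coefficients $c_l^{(k,\alpha)}$ be as defined in the context. Then for every integer $k\ge1$: (i) $c_0^{(k,\alpha)}>c_1^{(k,\alpha)}>\cdots>c_{k-1}^{(k,\alpha)}>c_k^{(k,\alpha)}>\frac{3(k+\sigma)^{1-\alpha}}{8}\tau^{2-\alpha}>0$; (ii) $4\sigma c_0^{(k,\alpha)}-(1+2\sigma)c_1^{(k,\alpha)}>0$; and for $1\le k\le N$: (iii) $\sum_{m=1}^{k}c_{m-1}^{(m,\alpha)}<\frac{(8\sigma+21)T^{2-\alpha}}{16(1+2\sigma)\sigma}$; (iv) there is a positive constant $C$, independent of $\tau$ and $k$, such that $$\sum_{m=1}^{k}\big(c_m^{(m,\alpha)}\big)^2\le\frac{9C}{16(1+2\sigma)^2}\begin{cases}\frac{(1+\sigma)^2T^{3-2\alpha}}{3-2\alpha}\tau+(1+\sigma)^{4-2\alpha}, & \alpha\in(1,1.5),\\ (1+\sigma)T, & \alpha=1.5,\\ \frac{2-3\sigma}{2\alpha-3}(1+\sigma)^{4-2\alpha}\tau^{4-2\alpha}, & \alpha\in(1.5,2).\end{cases}$$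
   Context: For integers $k\ge1$ define $a_1^{(k,\alpha)}=\frac32\tau^{2-\alpha}\int_0^{1/2}(s-\frac13)(k+\sigma-s)^{1-\alpha}\,\mathrm{d}s$; $a_l^{(k,\alpha)}=\tau^{2-\alpha}\int_0^1(s-\frac12)(k+\sigma-l+\frac32-s)^{1-\alpha}\,\mathrm{d}s$ for $2\le l\le k$; $b_l^{(k,\alpha)}=\tau^{2-\alpha}\int_0^1(\frac32-s)(k+\sigma-l+\frac12-s)^{1-\alpha}\,\mathrm{d}s$ for $1\le l\le k-1$; $b_k^{(k,\alpha)}=\tau^{2-\alpha}\int_0^{\sigma+1/2}s^{1-\alpha}\,\mathrm{d}s$; $c_l^{(k,\alpha)}=a_{k-l}^{(k,\alpha)}+b_{k-l}^{(k,\alpha)}$ for $0\le l\le k-1$, and $c_k^{(k,\alpha)}=\frac32\tau^{2-\alpha}\int_0^{1/2}(1-s)(k+\sigma-s)^{1-\alpha}\,\mathrm{d}s$. *)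

theory Defs
  imports "HOL-Analysis.Analysis"
begin

definition sig :: "real \<Rightarrow> real" where
  "sig \<alpha> = 1 - \<alpha> / 2"

text \<open>a_l^(k,alpha), with tau given explicitly; l is meaningful for 1 <= l <= k.\<close>
definition coef_a :: "real \<Rightarrow> real \<Rightarrow> nat \<Rightarrow> nat \<Rightarrow> real" where
  "coef_a \<alpha> \<tau> k l =
     (if l = 1 then 3/2 * \<tau> powr (2 - \<alpha>) *
        integral {0..1/2} (\<lambda>s. (s - 1/3) * (real k + sig \<alpha> - s) powr (1 - \<alpha>))
      else \<tau> powr (2 - \<alpha>) *
        integral {0..1} (\<lambda>s. (s - 1/2) * (real k + sig \<alpha> - real l + 3/2 - s) powr (1 - \<alpha>)))"

text \<open>b_l^(k,alpha); l is meaningful for 1 <= l <= k.\<close>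
definition coef_b :: "real \<Rightarrow> real \<Rightarrow> nat \<Rightarrow> nat \<Rightarrow> real" where
  "coef_b \<alpha> \<tau> k l =
     (if l = k then \<tau> powr (2 - \<alpha>) *
        integral {0..sig \<alpha> + 1/2} (\<lambda>s. s powr (1 - \<alpha>))
      else \<tau> powr (2 - \<alpha>) *
        integral {0..1} (\<lambda>s. (3/2 - s) * (real k + sig \<alpha> - real l + 1/2 - s) powr (1 - \<alpha>)))"

definition coef_c :: "real \<Rightarrow> real \<Rightarrow> nat \<Rightarrow> nat \<Rightarrow> real" where
  "coef_c \<alpha> \<tau> k l =
     (if l = k then 3/2 * \<tau> powr (2 - \<alpha>) *
        integral {0..1/2} (\<lambda>s. (1 - s) * (real k + sig \<alpha> - s) powr (1 - \<alpha>))
      else coef_a \<alpha> \<tau> k (k - l) + coef_b \<alpha> \<tau> k (k - l))"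

end

(* Every coefficient is tau^(2 - alpha) times an integral of w(s) * (c - s) powr e over
   [0, 1/2] or [0, 1], with an affine weight w and e = 1 - alpha in (-1, 0).  All estimates
   come from bounding such an integrand pointwise by a quadratic polynomial in s, using only
   that x powr e is decreasing and lies above its tangent lines.  The tangent slopes
   (alpha - 1) * x powr (- alpha) make the differences c_l - c_(l+1) positive; the interior
   ones are second differences of the convex function x powr e.  For (iii), the bound
   c_(m-1)^(m) <= 9/8 * tau^(2 - alpha) * integral_0^1 (m + sigma - 1/2 - s) powr e ds
   telescopes.  For (iv), c_m^(m) <= 9/16 * tau^(2 - alpha) * (m + sigma - 1/2) powr e; the
   squares are summed either as at most N = T / tau equal terms (alpha <= 3/2) or against the
   convergent series sum_m m powr (2 - 2 alpha) (alpha > 3/2). *)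

theory Submission
  imports Defs
begin

lemma powr_ge_tangent:
  fixes x y e :: real
  assumes "x > 0" "y > 0" "e \<le> 0"
  shows "x powr e + e * x powr (e - 1) * (y - x) \<le> y powr e"
proof -
  have "1 + e * (y / x - 1) \<le> 1 + e * ln (y / x)"
    using assms ln_le_minus_one[of "y / x"] by (simp add: mult_left_mono_neg)
  also have "\<dots> \<le> (y / x) powr e"
    using assms exp_ge_add_one_self[of "e * ln (y / x)"] by (simp add: powr_def)
  finally have "x powr e * (1 + e * (y / x - 1)) \<le> x powr e * (y / x) powr e"
    by (simp add: mult_left_mono)
  moreover have "x powr e * (1 + e * (y / x - 1)) = x powr e + e * x powr (e - 1) * (y - x)"
    using assms by (simp add: powr_diff field_simps)
  ultimately show ?thesis
    using assms by (simp add: powr_divide)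
qed

lemma shifted_powr_mono:
  fixes c s t e :: real
  assumes "e \<le> 0" "s \<le> t" "t < c"
  shows "(c - s) powr e \<le> (c - t) powr e"
  using assms by (intro powr_mono2') auto

lemma powr_midpoint_convex:
  fixes x h e :: real
  assumes "x - h > 0" "x + h > 0" "e \<le> 0"
  shows "2 * x powr e \<le> (x - h) powr e + (x + h) powr e"
  using powr_ge_tangent[of x "x - h" e] powr_ge_tangent[of x "x + h" e] assms by simp

lemma has_integral_quadratic:
  fixes a b u v w :: real
  assumes "a \<le> b"
  shows "((\<lambda>s. u * s^2 + v * s + w) has_integral
           u * (b^3 - a^3) / 3 + v * (b^2 - a^2) / 2 + w * (b - a)) {a..b}"
proof -
  define F where "F s = u * s^3 / 3 + v * s^2 / 2 + w * s" for s :: real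
  have "((\<lambda>s. u * s^2 + v * s + w) has_integral F b - F a) {a..b}"
    unfolding F_def
    by (rule fundamental_theorem_of_calculus[OF assms])
       (auto intro!: derivative_eq_intros simp: power2_eq_square
             simp flip: has_real_derivative_iff_has_vector_derivative)
  moreover have "F b - F a = u * (b^3 - a^3) / 3 + v * (b^2 - a^2) / 2 + w * (b - a)"
    by (simp add: F_def field_simps)
  ultimately show ?thesis
    by simp
qed

lemma integral_ge_quadratic:
  fixes f :: "real \<Rightarrow> real"
  assumes "a \<le> b" "f integrable_on {a..b}"
    and "\<And>s. a \<le> s \<Longrightarrow> s \<le> b \<Longrightarrow> u * s^2 + v * s + w \<le> f s"
  shows "u * (b^3 - a^3) / 3 + v * (b^2 - a^2) / 2 + w * (b - a) \<le> integral {a..b} f"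
proof -
  note quadratic = has_integral_quadratic[OF assms(1), of u v w]
  have "integral {a..b} (\<lambda>s. u * s^2 + v * s + w) \<le> integral {a..b} f"
    using quadratic assms(2,3) by (intro integral_le) (auto simp: has_integral_integrable)
  then show ?thesis
    using integral_unique[OF quadratic] by simp
qed

lemma integral_le_quadratic:
  fixes f :: "real \<Rightarrow> real"
  assumes "a \<le> b" "f integrable_on {a..b}"
    and "\<And>s. a \<le> s \<Longrightarrow> s \<le> b \<Longrightarrow> f s \<le> u * s^2 + v * s + w"
  shows "integral {a..b} f \<le> u * (b^3 - a^3) / 3 + v * (b^2 - a^2) / 2 + w * (b - a)"
proof -
  note quadratic = has_integral_quadratic[OF assms(1), of u v w]
  have "integral {a..b} f \<le> integral {a..b} (\<lambda>s. u * s^2 + v * s + w)"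
    using quadratic assms(2,3) by (intro integral_le) (auto simp: has_integral_integrable)
  then show ?thesis
    using integral_unique[OF quadratic] by simp
qed

lemma has_integral_shifted_powr:
  fixes c e :: real
  assumes "c > 1" "e > -1"
  shows "((\<lambda>s. (c - s) powr e) has_integral
           (c powr (e + 1) - (c - 1) powr (e + 1)) / (e + 1)) {0..1}"
proof -
  define F where "F s = - ((c - s) powr (e + 1)) / (e + 1)" for s :: real
  have "((\<lambda>s. (c - s) powr e) has_integral F 1 - F 0) {0..1}"
    unfolding F_def using assms
    by (intro fundamental_theorem_of_calculus)
       (auto intro!: derivative_eq_intros simp flip: has_real_derivative_iff_has_vector_derivative)
  then show ?thesis
    by (simp add: F_def diff_divide_distrib)
qed

lemma weighted_powr_integrable:
  fixes a b c e :: real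
  assumes "c > b" "continuous_on {a..b} h"
  shows "(\<lambda>s. h s * (c - s) powr e) integrable_on {a..b}"
  using assms by (intro integrable_continuous_interval) (auto intro!: continuous_intros)

definition ck_integral :: "real \<Rightarrow> real \<Rightarrow> real" where
  "ck_integral e c = integral {0..1/2} (\<lambda>s. (1 - s) * (c - s) powr e)"

definition a1_integral :: "real \<Rightarrow> real \<Rightarrow> real" where
  "a1_integral e c = integral {0..1/2} (\<lambda>s. (s - 1/3) * (c - s) powr e)"

definition a_integral :: "real \<Rightarrow> real \<Rightarrow> real" where
  "a_integral e c = integral {0..1} (\<lambda>s. (s - 1/2) * (c - s) powr e)"

definition b_integral :: "real \<Rightarrow> real \<Rightarrow> real" where
  "b_integral e c = integral {0..1} (\<lambda>s. (3/2 - s) * (c - s) powr e)"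

lemma ck_integral_ge:
  assumes "c > 1/2" "e \<le> 0"
  shows "3/8 * c powr e \<le> ck_integral e c"
proof -
  define P where "P = c powr e"
  have "0 * ((1/2)^3 - 0^3) / 3 + (- P) * ((1/2)^2 - 0^2) / 2 + P * (1/2 - 0) \<le> ck_integral e c"
    unfolding ck_integral_def
  proof (rule integral_ge_quadratic)
    fix s :: real
    assume "0 \<le> s" "s \<le> 1/2"
    then have "(1 - s) * P \<le> (1 - s) * (c - s) powr e"
      unfolding P_def using shifted_powr_mono[of e 0 s c] assms by (intro mult_left_mono) auto
    then show "0 * s^2 + (- P) * s + P \<le> (1 - s) * (c - s) powr e"
      by (simp add: algebra_simps)
  qed (use assms in \<open>auto intro!: weighted_powr_integrable continuous_intros\<close>)
  then show ?thesis
    by (simp add: P_def power2_eq_square)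
qed

lemma ck_integral_le:
  assumes "c > 1/2" "e \<le> 0"
  shows "ck_integral e c \<le> 3/8 * (c - 1/2) powr e"
proof -
  define Q where "Q = (c - 1/2) powr e"
  have "ck_integral e c \<le> 0 * ((1/2)^3 - 0^3) / 3 + (- Q) * ((1/2)^2 - 0^2) / 2 + Q * (1/2 - 0)"
    unfolding ck_integral_def
  proof (rule integral_le_quadratic)
    fix s :: real
    assume "0 \<le> s" "s \<le> 1/2"
    then have "(1 - s) * (c - s) powr e \<le> (1 - s) * Q"
      unfolding Q_def using shifted_powr_mono[of e s "1/2" c] assms by (intro mult_left_mono) auto
    then show "(1 - s) * (c - s) powr e \<le> 0 * s^2 + (- Q) * s + Q"
      by (simp add: algebra_simps)
  qed (use assms in \<open>auto intro!: weighted_powr_integrable continuous_intros\<close>)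
  then show ?thesis
    by (simp add: Q_def power2_eq_square)
qed

lemma a1_integral_ge:
  assumes "c > 1/2" "e \<le> 0"
  shows "- 1/6 * (c - 1/2) powr e \<le> a1_integral e c"
proof -
  define Q where "Q = (c - 1/2) powr e"
  have "0 * ((1/2)^3 - 0^3) / 3 + 0 * ((1/2)^2 - 0^2) / 2 + (- Q/3) * (1/2 - 0) \<le> a1_integral e c"
    unfolding a1_integral_def
  proof (rule integral_ge_quadratic)
    fix s :: real
    assume s: "0 \<le> s" "s \<le> 1/2"
    have "(c - s) powr e \<le> Q"
      unfolding Q_def using shifted_powr_mono[of e s "1/2" c] s assms by auto
    moreover have "0 \<le> s * (c - s) powr e"
      using s by simp
    ultimately show "0 * s^2 + 0 * s + (- Q/3) \<le> (s - 1/3) * (c - s) powr e"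
      by (simp add: algebra_simps)
  qed (use assms in \<open>auto intro!: weighted_powr_integrable continuous_intros\<close>)
  then show ?thesis
    by (simp add: Q_def)
qed

lemma a1_integral_le:
  assumes "c > 1/2" "e \<le> 0"
  shows "a1_integral e c \<le> - 1/24 * c powr e + 1/12 * ((c - 1/2) powr e - c powr e)"
proof -
  define P where "P = c powr e"
  define Q where "Q = (c - 1/2) powr e"
  have "a1_integral e c
          \<le> 0 * ((1/2)^3 - 0^3) / 3 + P * ((1/2)^2 - 0^2) / 2 + (- P/3 + (Q - P)/6) * (1/2 - 0)"
    unfolding a1_integral_def
  proof (rule integral_le_quadratic)
    fix s :: real
    assume s: "0 \<le> s" "s \<le> 1/2"
    define X where "X = (c - s) powr e"
    have "P \<le> X" "X \<le> Q"
      unfolding P_def Q_def X_def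
      using shifted_powr_mono[of e 0 s c] shifted_powr_mono[of e s "1/2" c] s assms by auto
    then have "(s - 1/3) * (X - P) \<le> 1/6 * (Q - P)"
      using s by (intro order.trans[OF mult_right_mono[of "s - 1/3" "1/6"]]) auto
    moreover have "(s - 1/3) * X = (s - 1/3) * (X - P) + P * s - P/3"
      by (simp add: field_simps)
    ultimately show "(s - 1/3) * (c - s) powr e \<le> 0 * s^2 + P * s + (- P/3 + (Q - P)/6)"
      unfolding X_def by simp
  qed (use assms in \<open>auto intro!: weighted_powr_integrable continuous_intros\<close>)
  then show ?thesis
    by (simp add: P_def Q_def algebra_simps power2_eq_square)
qed

corollary a1_integral_le':
  assumes "c > 1/2" "e \<le> 0"
  shows "a1_integral e c \<le> 1/12 * (c - 1/2) powr e"
proof -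
  have "0 \<le> c powr e"
    by simp
  then show ?thesis
    using a1_integral_le[OF assms] by argo
qed

lemma a_integral_nonneg:
  assumes "c > 1" "e \<le> 0"
  shows "0 \<le> a_integral e c"
proof -
  define M where "M = (c - 1/2) powr e"
  have "0 * (1^3 - 0^3) / 3 + M * (1^2 - 0^2) / 2 + (- M/2) * (1 - 0) \<le> a_integral e c"
    unfolding a_integral_def
  proof (rule integral_ge_quadratic)
    fix s :: real
    assume s: "0 \<le> s" "s \<le> 1"
    have "(s - 1/2) * M \<le> (s - 1/2) * (c - s) powr e"
    proof (cases "s \<ge> 1/2")
      case True
      then show ?thesis
        unfolding M_def using shifted_powr_mono[of e "1/2" s c] s assms
        by (intro mult_left_mono) auto
    next
      case False
      then show ?thesis
        unfolding M_def using shifted_powr_mono[of e s "1/2" c] s assms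
        by (intro mult_left_mono_neg) auto
    qed
    then show "0 * s^2 + M * s + (- M/2) \<le> (s - 1/2) * (c - s) powr e"
      by (simp add: algebra_simps)
  qed (use assms in \<open>auto intro!: weighted_powr_integrable continuous_intros\<close>)
  then show ?thesis
    by simp
qed

lemma a_integral_le:
  assumes "c > 1" "e \<le> 0"
  shows "a_integral e c \<le> 1/2 * ((c - 1) powr e - c powr e)"
proof -
  define P where "P = c powr e"
  define M where "M = (c - 1/2) powr e"
  define R where "R = (c - 1) powr e"
  have "a_integral e c \<le> 0 * (1^3 - 0^3) / 3 + M * (1^2 - 0^2) / 2 + (- M/2 + (R - P)/2) * (1 - 0)"
    unfolding a_integral_def
  proof (rule integral_le_quadratic)
    fix s :: real
    assume s: "0 \<le> s" "s \<le> 1"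
    define X where "X = (c - s) powr e"
    have "P \<le> X" "X \<le> R" "P \<le> M" "M \<le> R"
      unfolding P_def M_def R_def X_def
      using shifted_powr_mono[of e 0 s c] shifted_powr_mono[of e s 1 c]
        shifted_powr_mono[of e 0 "1/2" c] shifted_powr_mono[of e "1/2" 1 c] s assms
      by auto
    then have "\<bar>X - M\<bar> \<le> R - P"
      by linarith
    moreover have "\<bar>s - 1/2\<bar> \<le> 1/2"
      using s by linarith
    ultimately have "\<bar>s - 1/2\<bar> * \<bar>X - M\<bar> \<le> 1/2 * (R - P)"
      by (intro mult_mono) auto
    then have "(s - 1/2) * (X - M) \<le> 1/2 * (R - P)"
      by (metis abs_ge_self abs_mult order.trans)
    moreover have "(s - 1/2) * X = (s - 1/2) * (X - M) + M * s - M/2"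
      by (simp add: field_simps)
    ultimately show "(s - 1/2) * (c - s) powr e \<le> 0 * s^2 + M * s + (- M/2 + (R - P)/2)"
      unfolding X_def by simp
  qed (use assms in \<open>auto intro!: weighted_powr_integrable continuous_intros\<close>)
  then show ?thesis
    by (simp add: P_def R_def)
qed

lemma b_integral_ge:
  assumes "c > 1" "e \<le> 0"
  shows "c powr e \<le> b_integral e c"
proof -
  define P where "P = c powr e"
  have "0 * (1^3 - 0^3) / 3 + (- P) * (1^2 - 0^2) / 2 + (3/2 * P) * (1 - 0) \<le> b_integral e c"
    unfolding b_integral_def
  proof (rule integral_ge_quadratic)
    fix s :: real
    assume "0 \<le> s" "s \<le> 1"
    then have "(3/2 - s) * P \<le> (3/2 - s) * (c - s) powr e"
      unfolding P_def using shifted_powr_mono[of e 0 s c] assms by (intro mult_left_mono) auto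
    then show "0 * s^2 + (- P) * s + 3/2 * P \<le> (3/2 - s) * (c - s) powr e"
      by (simp add: algebra_simps)
  qed (use assms in \<open>auto intro!: weighted_powr_integrable continuous_intros\<close>)
  then show ?thesis
    by (simp add: P_def)
qed

lemma b_integral_le:
  assumes "c > 1" "e \<le> 0"
  shows "b_integral e c \<le> (c - 1) powr e + 7/12 * e * c powr (e - 1)"
proof -
  define K where "K = e * c powr (e - 1)"
  define R where "R = (c - 1) powr e"
  have "b_integral e c
          \<le> K * (1^3 - 0^3) / 3 + (- R - 5/2 * K) * (1^2 - 0^2) / 2 + (3/2 * R + 3/2 * K) * (1 - 0)"
    unfolding b_integral_def
  proof (rule integral_le_quadratic)
    fix s :: real
    assume s: "0 \<le> s" "s \<le> 1"
    have "(c - s) powr e + e * (c - s) powr (e - 1) * (s - 1) \<le> R"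
      unfolding R_def using powr_ge_tangent[of "c - s" "c - 1" e] s assms by simp
    moreover have "e * (c - s) powr (e - 1) \<le> K"
      unfolding K_def using shifted_powr_mono[of "e - 1" 0 s c] s assms
      by (simp add: mult_left_mono_neg)
    then have "(1 - s) * (e * (c - s) powr (e - 1)) \<le> (1 - s) * K"
      using s by (intro mult_left_mono) auto
    ultimately have "(c - s) powr e \<le> R + (1 - s) * K"
      by (simp add: algebra_simps)
    then have "(3/2 - s) * (c - s) powr e \<le> (3/2 - s) * (R + (1 - s) * K)"
      using s by (intro mult_left_mono) auto
    also have "\<dots> = K * s^2 + (- R - 5/2 * K) * s + (3/2 * R + 3/2 * K)"
      by (simp add: field_simps power2_eq_square)
    finally show "(3/2 - s) * (c - s) powr e
                    \<le> K * s^2 + (- R - 5/2 * K) * s + (3/2 * R + 3/2 * K)" .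
  qed (use assms in \<open>auto intro!: weighted_powr_integrable continuous_intros\<close>)
  then show ?thesis
    by (simp add: K_def R_def field_simps)
qed

lemma b_integral_eq:
  assumes "c > 1" "e > -1"
  shows "b_integral e c = (c powr (e + 1) - (c - 1) powr (e + 1)) / (e + 1) - a_integral e c"
proof -
  have "b_integral e c = integral {0..1} (\<lambda>s. (c - s) powr e) - a_integral e c"
    unfolding a_integral_def b_integral_def
    using assms
    by (subst integral_diff[symmetric])
       (auto simp: algebra_simps
             intro!: integrable_continuous_interval continuous_intros weighted_powr_integrable)
  then show ?thesis
    using integral_unique[OF has_integral_shifted_powr[OF assms]] by simp
qed

lemma b_integral_diff_ge:
  assumes "c > 1" "e \<le> 0"
  shows "- e / 2 * (c + 1) powr (e - 1) \<le> b_integral e c - b_integral e (c + 1)"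
proof -
  define Q where "Q = - e * (c + 1) powr (e - 1)"
  have "0 * (1^3 - 0^3) / 3 + 0 * (1^2 - 0^2) / 2 + Q/2 * (1 - 0)
          \<le> integral {0..1} (\<lambda>s. (3/2 - s) * (c - s) powr e - (3/2 - s) * (c + 1 - s) powr e)"
  proof (rule integral_ge_quadratic)
    fix s :: real
    assume s: "0 \<le> s" "s \<le> 1"
    have "(c + 1 - s) powr e + e * (c + 1 - s) powr (e - 1) * (- 1) \<le> (c - s) powr e"
      using powr_ge_tangent[of "c + 1 - s" "c - s" e] s assms by simp
    moreover have "(c + 1) powr (e - 1) \<le> (c + 1 - s) powr (e - 1)"
      using shifted_powr_mono[of "e - 1" 0 s "c + 1"] s assms by simp
    then have "Q \<le> - e * (c + 1 - s) powr (e - 1)"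
      unfolding Q_def by (rule mult_left_mono) (use assms in simp)
    ultimately have "Q \<le> (c - s) powr e - (c + 1 - s) powr e"
      by simp
    moreover have "0 \<le> Q"
      unfolding Q_def using assms by (simp add: mult_nonpos_nonneg)
    ultimately have "1/2 * Q \<le> (3/2 - s) * ((c - s) powr e - (c + 1 - s) powr e)"
      using s by (intro mult_mono) auto
    then show "0 * s^2 + 0 * s + Q/2 \<le> (3/2 - s) * (c - s) powr e - (3/2 - s) * (c + 1 - s) powr e"
      by (simp add: algebra_simps)
  qed (use assms in \<open>auto intro!: integrable_diff weighted_powr_integrable continuous_intros\<close>)
  also have "\<dots> = b_integral e c - b_integral e (c + 1)"
    unfolding b_integral_def using assms
    by (intro integral_diff) (auto intro!: weighted_powr_integrable continuous_intros)
  finally show ?thesis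
    by (simp add: Q_def)
qed

corollary b_integral_le_primitive:
  assumes "c > 1" "e > -1" "e \<le> 0"
  shows "b_integral e c \<le> (c powr (e + 1) - (c - 1) powr (e + 1)) / (e + 1)"
  using b_integral_eq[OF assms(1,2)] a_integral_nonneg[OF assms(1,3)] by simp

lemma powr_weighted_differences_ge:
  fixes z e w :: real
  assumes "z > 0" "e \<le> 0" "w \<ge> 0"
  shows "- e * (z + 2) powr (e - 1)
           \<le> (1 - w) * ((z + 1) powr e - (z + 2) powr e) + w * (z powr e - (z + 1) powr e)"
proof -
  (* By convexity z powr e - (z + 1) powr e \<ge> (z + 1) powr e - (z + 2) powr e, so the right-hand
     side is at least (z + 1) powr e - (z + 2) powr e, which the tangent at z + 2 bounds. *)
  have "2 * (z + 1) powr e \<le> z powr e + (z + 2) powr e"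
    using powr_midpoint_convex[of "z + 1" 1 e] assms by (simp add: algebra_simps)
  then have "w * ((z + 1) powr e - (z + 2) powr e) \<le> w * (z powr e - (z + 1) powr e)"
    using assms by (intro mult_left_mono) auto
  moreover have "(z + 2) powr e + e * (z + 2) powr (e - 1) * (- 1) \<le> (z + 1) powr e"
    using powr_ge_tangent[of "z + 2" "z + 1" e] assms by simp
  ultimately show ?thesis
    by (simp add: algebra_simps)
qed

lemma a_b_integral_second_difference_ge:
  assumes "y > 1" "e \<le> 0"
  shows "- e * (y + 2) powr (e - 1)
           \<le> (a_integral e (y + 1) + b_integral e y)
              - (a_integral e (y + 2) + b_integral e (y + 1))"
proof -
  define Q where "Q = - e * (y + 2) powr (e - 1)"
  define h where "h = (\<lambda>s. (s - 1/2) * (y + 1 - s) powr e + (3/2 - s) * (y - s) powr e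
                        - ((s - 1/2) * (y + 2 - s) powr e + (3/2 - s) * (y + 1 - s) powr e))"
  have "0 * (1^3 - 0^3) / 3 + 0 * (1^2 - 0^2) / 2 + Q * (1 - 0) \<le> integral {0..1} h"
  proof (rule integral_ge_quadratic)
    fix s :: real
    assume s: "0 \<le> s" "s \<le> 1"
    have "(y + 2) powr (e - 1) \<le> (y - s + 2) powr (e - 1)"
      using shifted_powr_mono[of "e - 1" 0 s "y + 2"] s assms by (simp add: algebra_simps)
    then have "Q \<le> - e * (y - s + 2) powr (e - 1)"
      unfolding Q_def by (rule mult_left_mono) (use assms in simp)
    also have "\<dots> \<le> h s"
      using powr_weighted_differences_ge[of "y - s" e "3/2 - s"] s assms
      by (simp add: h_def algebra_simps)
    finally show "0 * s^2 + 0 * s + Q \<le> h s"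
      by simp
  qed (use assms in \<open>auto simp: h_def intro!: integrable_diff integrable_add
                                            weighted_powr_integrable continuous_intros\<close>)
  also have "\<dots>
      = (a_integral e (y + 1) + b_integral e y) - (a_integral e (y + 2) + b_integral e (y + 1))"
    unfolding h_def a_integral_def b_integral_def using assms
    by (subst integral_diff integral_add;
        auto intro!: integrable_add weighted_powr_integrable continuous_intros)+
  finally show ?thesis
    by (simp add: Q_def)
qed

lemma sig_bounds:
  assumes "1 < \<alpha>" "\<alpha> < 2"
  shows "0 < sig \<alpha>" "sig \<alpha> < 1/2"
  using assms by (auto simp: sig_def)

lemma two_minus_eq_sig: "2 - \<alpha> = 2 * sig \<alpha>"
  by (simp add: sig_def)

lemma coef_a_eq:
  "l \<noteq> 1 \<Longrightarrow>
    coef_a \<alpha> \<tau> k l = \<tau> powr (2 - \<alpha>) * a_integral (1 - \<alpha>) (real k + sig \<alpha> - real l + 3/2)"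
  by (simp add: coef_a_def a_integral_def)

lemma coef_a_1_eq: "coef_a \<alpha> \<tau> k 1 = 3/2 * \<tau> powr (2 - \<alpha>) * a1_integral (1 - \<alpha>) (real k + sig \<alpha>)"
  by (simp add: coef_a_def a1_integral_def)

lemma coef_b_eq:
  "l \<noteq> k \<Longrightarrow>
    coef_b \<alpha> \<tau> k l = \<tau> powr (2 - \<alpha>) * b_integral (1 - \<alpha>) (real k + sig \<alpha> - real l + 1/2)"
  by (simp add: coef_b_def b_integral_def)

lemma coef_c_eq: "l < k \<Longrightarrow> coef_c \<alpha> \<tau> k l = coef_a \<alpha> \<tau> k (k - l) + coef_b \<alpha> \<tau> k (k - l)"
  by (simp add: coef_c_def)

lemma coef_c_last_eq: "coef_c \<alpha> \<tau> k k = 3/2 * \<tau> powr (2 - \<alpha>) * ck_integral (1 - \<alpha>) (real k + sig \<alpha>)"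
  by (simp add: coef_c_def ck_integral_def)

lemma coef_b_last_eq:
  assumes "1 < \<alpha>" "\<alpha> < 2"
  shows "coef_b \<alpha> \<tau> k k = \<tau> powr (2 - \<alpha>) * ((sig \<alpha> + 1/2) powr (2 - \<alpha>) / (2 - \<alpha>))"
proof -
  have "((\<lambda>s. s powr (1 - \<alpha>)) has_integral (sig \<alpha> + 1/2) powr (2 - \<alpha>) / (2 - \<alpha>)) {0..sig \<alpha> + 1/2}"
    using has_integral_powr_from_0[of "1 - \<alpha>" "sig \<alpha> + 1/2"] sig_bounds[OF assms] assms by simp
  then show ?thesis
    by (simp add: coef_b_def integral_unique)
qed

lemma coef_b_last_eq':
  assumes "1 < \<alpha>" "\<alpha> < 2"
  shows "coef_b \<alpha> \<tau> k k
           = (sig \<alpha> + 1/2) / (2 * sig \<alpha>) * (\<tau> powr (2 - \<alpha>) * (sig \<alpha> + 1/2) powr (1 - \<alpha>))"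
proof -
  have "(sig \<alpha> + 1/2) powr (2 - \<alpha>) = (sig \<alpha> + 1/2) * (sig \<alpha> + 1/2) powr (1 - \<alpha>)"
    using sig_bounds[OF assms] powr_add[of "sig \<alpha> + 1/2" "1 - \<alpha>" 1] by simp
  then show ?thesis
    by (simp add: coef_b_last_eq[OF assms] two_minus_eq_sig[of \<alpha>])
qed

lemma coef_c_interior_eq:
  assumes "1 \<le> l" "l + 2 \<le> k"
  shows "coef_c \<alpha> \<tau> k l
           = \<tau> powr (2 - \<alpha>) * (a_integral (1 - \<alpha>) (real l + sig \<alpha> + 3/2)
                             + b_integral (1 - \<alpha>) (real l + sig \<alpha> + 1/2))"
proof -
  have a: "real k + sig \<alpha> - real (k - l) + 3/2 = real l + sig \<alpha> + 3/2"
    and b: "real k + sig \<alpha> - real (k - l) + 1/2 = real l + sig \<alpha> + 1/2"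
    using assms by (simp_all add: of_nat_diff)
  show ?thesis
    using coef_a_eq[of "k - l" \<alpha> \<tau> k, unfolded a] coef_b_eq[of "k - l" k \<alpha> \<tau>, unfolded b]
      coef_c_eq[of l k \<alpha> \<tau>] assms
    by (simp add: distrib_left)
qed

lemma coef_c_pred_eq:
  assumes "k \<ge> 2"
  shows "coef_c \<alpha> \<tau> k (k - 1)
           = \<tau> powr (2 - \<alpha>) * (3/2 * a1_integral (1 - \<alpha>) (real k + sig \<alpha>)
                             + b_integral (1 - \<alpha>) (real k + sig \<alpha> - 1/2))"
proof -
  have b: "real k + sig \<alpha> - real 1 + 1/2 = real k + sig \<alpha> - 1/2"
    by simp
  show ?thesis
    using coef_a_1_eq[of \<alpha> \<tau> k] coef_b_eq[of 1 k \<alpha> \<tau>, unfolded b] coef_c_eq[of "k - 1" k \<alpha> \<tau>] assms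
    by (simp add: distrib_left)
qed

context
  fixes \<alpha> \<tau> :: real
  assumes \<alpha>: "1 < \<alpha>" "\<alpha> < 2" and \<tau>: "\<tau> > 0"
begin

lemma coef_a_1_ge:
  assumes "k \<ge> 1"
  shows "- 1/4 * (\<tau> powr (2 - \<alpha>) * (real k + sig \<alpha> - 1/2) powr (1 - \<alpha>)) \<le> coef_a \<alpha> \<tau> k 1"
proof -
  have "- 1/6 * (real k + sig \<alpha> - 1/2) powr (1 - \<alpha>) \<le> a1_integral (1 - \<alpha>) (real k + sig \<alpha>)"
    using a1_integral_ge[of "real k + sig \<alpha>" "1 - \<alpha>"] sig_bounds[OF \<alpha>] \<alpha> assms by simp
  from mult_left_mono[OF this, of "3/2 * \<tau> powr (2 - \<alpha>)"] show ?thesis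
    unfolding coef_a_1_eq by (simp add: algebra_simps)
qed

lemma coef_a_1_le:
  assumes "k \<ge> 1"
  shows "coef_a \<alpha> \<tau> k 1 \<le> 1/8 * (\<tau> powr (2 - \<alpha>) * (real k + sig \<alpha> - 1/2) powr (1 - \<alpha>))"
proof -
  have "a1_integral (1 - \<alpha>) (real k + sig \<alpha>) \<le> 1/12 * (real k + sig \<alpha> - 1/2) powr (1 - \<alpha>)"
    using a1_integral_le'[of "real k + sig \<alpha>" "1 - \<alpha>"] sig_bounds[OF \<alpha>] \<alpha> assms by simp
  from mult_left_mono[OF this, of "3/2 * \<tau> powr (2 - \<alpha>)"] show ?thesis
    unfolding coef_a_1_eq by (simp add: algebra_simps)
qed

lemma coef_b_1_ge:
  assumes "k \<ge> 1"
  shows "\<tau> powr (2 - \<alpha>) * (real k + sig \<alpha> - 1/2) powr (1 - \<alpha>) \<le> coef_b \<alpha> \<tau> k 1"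
proof (cases "k = 1")
  case True
  have "1 \<le> (sig \<alpha> + 1/2) / (2 * sig \<alpha>)"
    using sig_bounds[OF \<alpha>] by simp
  from mult_right_mono[OF this, of "\<tau> powr (2 - \<alpha>) * (sig \<alpha> + 1/2) powr (1 - \<alpha>)"] show ?thesis
    using True by (simp add: coef_b_last_eq'[OF \<alpha>] add.commute)
next
  case False
  have "(real k + sig \<alpha> - 1/2) powr (1 - \<alpha>) \<le> b_integral (1 - \<alpha>) (real k + sig \<alpha> - 1/2)"
    using b_integral_ge[of "real k + sig \<alpha> - 1/2" "1 - \<alpha>"] sig_bounds[OF \<alpha>] \<alpha> assms False by simp
  from mult_left_mono[OF this, of "\<tau> powr (2 - \<alpha>)"] show ?thesis
    using False by (simp add: coef_b_eq)
qed

lemma coef_c_last_gt: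
  assumes "k \<ge> 1"
  shows "3 * (real k + sig \<alpha>) powr (1 - \<alpha>) / 8 * \<tau> powr (2 - \<alpha>) < coef_c \<alpha> \<tau> k k"
proof -
  have "3/8 * (real k + sig \<alpha>) powr (1 - \<alpha>) \<le> ck_integral (1 - \<alpha>) (real k + sig \<alpha>)"
    using ck_integral_ge[of "real k + sig \<alpha>" "1 - \<alpha>"] sig_bounds[OF \<alpha>] \<alpha> assms by simp
  from mult_left_mono[OF this, of "3/2 * \<tau> powr (2 - \<alpha>)"]
  have "9/16 * (real k + sig \<alpha>) powr (1 - \<alpha>) * \<tau> powr (2 - \<alpha>) \<le> coef_c \<alpha> \<tau> k k"
    by (simp add: coef_c_last_eq)
  moreover have "0 < (real k + sig \<alpha>) powr (1 - \<alpha>) * \<tau> powr (2 - \<alpha>)"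
    using sig_bounds[OF \<alpha>] \<tau> by simp
  ultimately show ?thesis
    by simp
qed

lemma coef_c_last_le:
  assumes "k \<ge> 1"
  shows "coef_c \<alpha> \<tau> k k \<le> 9/16 * (\<tau> powr (2 - \<alpha>) * (real k + sig \<alpha> - 1/2) powr (1 - \<alpha>))"
proof -
  have "ck_integral (1 - \<alpha>) (real k + sig \<alpha>) \<le> 3/8 * (real k + sig \<alpha> - 1/2) powr (1 - \<alpha>)"
    using ck_integral_le[of "real k + sig \<alpha>" "1 - \<alpha>"] sig_bounds[OF \<alpha>] \<alpha> assms by simp
  from mult_left_mono[OF this, of "3/2 * \<tau> powr (2 - \<alpha>)"] show ?thesis
    by (simp add: coef_c_last_eq)
qed

lemma coef_b_last_le_coef_c_0:
  assumes "k \<ge> 2"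
  shows "coef_b \<alpha> \<tau> k k \<le> coef_c \<alpha> \<tau> k 0"
proof -
  have "0 \<le> a_integral (1 - \<alpha>) (real k + sig \<alpha> - real k + 3/2)"
    using a_integral_nonneg[of "real k + sig \<alpha> - real k + 3/2" "1 - \<alpha>"] sig_bounds[OF \<alpha>] \<alpha> by simp
  then show ?thesis
    using assms \<tau> by (simp add: coef_c_eq coef_a_eq)
qed

lemma coef_a_pred_le:
  assumes "k \<ge> 2"
  shows "coef_a \<alpha> \<tau> k (k - 1) \<le> \<tau> powr (2 - \<alpha>) * ((\<alpha> - 1) / 2 * (sig \<alpha> + 3/2) powr (- \<alpha>))"
proof -
  define D where "D = (\<alpha> - 1) * (sig \<alpha> + 3/2) powr (- \<alpha>)"
  have tangent: "(sig \<alpha> + 3/2) powr (1 - \<alpha>) - y powr (1 - \<alpha>) \<le> (y - (sig \<alpha> + 3/2)) * D"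
    if "y > 0" for y
    using powr_ge_tangent[of "sig \<alpha> + 3/2" y "1 - \<alpha>"] sig_bounds[OF \<alpha>] \<alpha> that
    by (simp add: D_def algebra_simps)
  have "D \<ge> 0"
    using \<alpha> by (simp add: D_def)
  have "coef_a \<alpha> \<tau> k (k - 1) \<le> \<tau> powr (2 - \<alpha>) * (D / 2)"
  proof (cases "k = 2")
    case True
    have "a1_integral (1 - \<alpha>) (sig \<alpha> + 2)
            \<le> - 1/24 * (sig \<alpha> + 2) powr (1 - \<alpha>)
               + 1/12 * ((sig \<alpha> + 2 - 1/2) powr (1 - \<alpha>) - (sig \<alpha> + 2) powr (1 - \<alpha>))"
      using a1_integral_le[of "sig \<alpha> + 2" "1 - \<alpha>"] sig_bounds[OF \<alpha>] \<alpha> by simp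
    also have "sig \<alpha> + 2 - 1/2 = sig \<alpha> + 3/2"
      by simp
    finally have "3/2 * a1_integral (1 - \<alpha>) (sig \<alpha> + 2) \<le> D / 2"
      using tangent[of "sig \<alpha> + 2"] sig_bounds[OF \<alpha>] powr_ge_zero[of "sig \<alpha> + 2" "1 - \<alpha>"] \<open>D \<ge> 0\<close>
      by argo
    moreover have arg: "real k + sig \<alpha> = sig \<alpha> + 2"
      using True by simp
    ultimately show ?thesis
      using True \<tau> coef_a_1_eq[of \<alpha> \<tau> k, unfolded arg] mult_left_mono[of _ _ "\<tau> powr (2 - \<alpha>)"]
      by (simp add: mult.assoc)
  next
    case False
    have "a_integral (1 - \<alpha>) (sig \<alpha> + 5/2)
            \<le> 1/2 * ((sig \<alpha> + 5/2 - 1) powr (1 - \<alpha>) - (sig \<alpha> + 5/2) powr (1 - \<alpha>))"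
      using a_integral_le[of "sig \<alpha> + 5/2" "1 - \<alpha>"] sig_bounds[OF \<alpha>] \<alpha> by simp
    also have "sig \<alpha> + 5/2 - 1 = sig \<alpha> + 3/2"
      by simp
    finally have "a_integral (1 - \<alpha>) (sig \<alpha> + 5/2) \<le> D / 2"
      using tangent[of "sig \<alpha> + 5/2"] sig_bounds[OF \<alpha>] by argo
    moreover have arg: "real k + sig \<alpha> - real (k - 1) + 3/2 = sig \<alpha> + 5/2"
      using assms by (simp add: of_nat_diff)
    ultimately show ?thesis
      using False assms \<tau> coef_a_eq[of "k - 1" \<alpha> \<tau> k, unfolded arg] by (simp add: mult_left_mono)
  qed
  then show ?thesis
    by (simp add: D_def)
qed

lemma coef_b_pred_le:
  assumes "k \<ge> 2"
  shows "coef_b \<alpha> \<tau> k (k - 1)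
           \<le> \<tau> powr (2 - \<alpha>)
              * ((sig \<alpha> + 1/2) powr (1 - \<alpha>) - 7/12 * (\<alpha> - 1) * (sig \<alpha> + 3/2) powr (- \<alpha>))"
proof -
  have "b_integral (1 - \<alpha>) (sig \<alpha> + 3/2)
          \<le> (sig \<alpha> + 3/2 - 1) powr (1 - \<alpha>) + 7/12 * (1 - \<alpha>) * (sig \<alpha> + 3/2) powr (1 - \<alpha> - 1)"
    using b_integral_le[of "sig \<alpha> + 3/2" "1 - \<alpha>"] sig_bounds[OF \<alpha>] \<alpha> by simp
  also have "\<dots> = (sig \<alpha> + 1/2) powr (1 - \<alpha>) - 7/12 * (\<alpha> - 1) * (sig \<alpha> + 3/2) powr (- \<alpha>)"
    by (simp add: field_simps)
  finally have "\<tau> powr (2 - \<alpha>) * b_integral (1 - \<alpha>) (sig \<alpha> + 3/2)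
      \<le> \<tau> powr (2 - \<alpha>)
         * ((sig \<alpha> + 1/2) powr (1 - \<alpha>) - 7/12 * (\<alpha> - 1) * (sig \<alpha> + 3/2) powr (- \<alpha>))"
    using \<tau> by (simp add: mult_left_mono)
  moreover have arg: "real k + sig \<alpha> - real (k - 1) + 1/2 = sig \<alpha> + 3/2"
    using assms by (simp add: of_nat_diff)
  ultimately show ?thesis
    using assms coef_b_eq[of "k - 1" k \<alpha> \<tau>, unfolded arg] by simp
qed

lemma coef_c_1_lt:
  assumes "k \<ge> 2"
  shows "coef_c \<alpha> \<tau> k 1 < \<tau> powr (2 - \<alpha>) * (sig \<alpha> + 1/2) powr (1 - \<alpha>)"
proof -
  have "coef_c \<alpha> \<tau> k 1 = coef_a \<alpha> \<tau> k (k - 1) + coef_b \<alpha> \<tau> k (k - 1)"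
    using coef_c_eq[of 1 k \<alpha> \<tau>] assms by simp
  also have "\<dots> \<le> \<tau> powr (2 - \<alpha>) * ((\<alpha> - 1) / 2 * (sig \<alpha> + 3/2) powr (- \<alpha>))
      + \<tau> powr (2 - \<alpha>)
         * ((sig \<alpha> + 1/2) powr (1 - \<alpha>) - 7/12 * (\<alpha> - 1) * (sig \<alpha> + 3/2) powr (- \<alpha>))"
    using coef_a_pred_le[OF assms] coef_b_pred_le[OF assms] by (rule add_mono)
  also have "\<dots> = \<tau> powr (2 - \<alpha>)
                    * ((sig \<alpha> + 1/2) powr (1 - \<alpha>) - (\<alpha> - 1) / 12 * (sig \<alpha> + 3/2) powr (- \<alpha>))"
    by (simp add: field_simps)
  also have "\<dots> < \<tau> powr (2 - \<alpha>) * (sig \<alpha> + 1/2) powr (1 - \<alpha>)"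
    using \<alpha> \<tau> sig_bounds[OF \<alpha>] by simp
  finally show ?thesis .
qed

lemma coef_c_last_lt:
  assumes "k \<ge> 1"
  shows "coef_c \<alpha> \<tau> k k < coef_c \<alpha> \<tau> k (k - 1)"
proof -
  define W where "W = \<tau> powr (2 - \<alpha>) * (real k + sig \<alpha> - 1/2) powr (1 - \<alpha>)"
  have "0 < W"
    using \<tau> sig_bounds[OF \<alpha>] assms by (simp add: W_def)
  moreover have "coef_c \<alpha> \<tau> k (k - 1) = coef_a \<alpha> \<tau> k 1 + coef_b \<alpha> \<tau> k 1"
    using coef_c_eq[of "k - 1" k \<alpha> \<tau>] assms by simp
  ultimately show ?thesis
    using coef_a_1_ge[OF assms] coef_b_1_ge[OF assms] coef_c_last_le[OF assms]
    unfolding W_def [symmetric] by linarith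
qed

lemma coef_c_1_lt_0:
  assumes "k \<ge> 2"
  shows "coef_c \<alpha> \<tau> k 1 < coef_c \<alpha> \<tau> k 0"
proof -
  have "1 \<le> (sig \<alpha> + 1/2) / (2 * sig \<alpha>)"
    using sig_bounds[OF \<alpha>] by simp
  from mult_right_mono[OF this, of "\<tau> powr (2 - \<alpha>) * (sig \<alpha> + 1/2) powr (1 - \<alpha>)"]
  have "\<tau> powr (2 - \<alpha>) * (sig \<alpha> + 1/2) powr (1 - \<alpha>) \<le> coef_b \<alpha> \<tau> k k"
    by (simp add: coef_b_last_eq'[OF \<alpha>])
  then show ?thesis
    using coef_c_1_lt[OF assms] coef_b_last_le_coef_c_0[OF assms] by linarith
qed

lemma coef_c_pred_lt:
  assumes "k \<ge> 3"
  shows "coef_c \<alpha> \<tau> k (k - 1) < coef_c \<alpha> \<tau> k (k - 2)"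
proof -
  define x where "x = real k + sig \<alpha>"
  define q where "q = x - 1/2"
  define D where "D = (\<alpha> - 1) * q powr (- \<alpha>)"
  have "q > 2" "x > 0"
    using assms sig_bounds[OF \<alpha>] by (auto simp: q_def x_def)
  have a: "real (k - 2) + sig \<alpha> + 3/2 = q" and b: "real (k - 2) + sig \<alpha> + 1/2 = q - 1"
    using assms by (simp_all add: q_def x_def of_nat_diff)
  have "3/2 * a1_integral (1 - \<alpha>) x + b_integral (1 - \<alpha>) q
          < a_integral (1 - \<alpha>) q + b_integral (1 - \<alpha>) (q - 1)"
  proof -
    have "0 \<le> a_integral (1 - \<alpha>) q"
      using a_integral_nonneg[of q "1 - \<alpha>"] \<open>q > 2\<close> \<alpha> by simp
    moreover have "D / 2 \<le> b_integral (1 - \<alpha>) (q - 1) - b_integral (1 - \<alpha>) q"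
      using b_integral_diff_ge[of "q - 1" "1 - \<alpha>"] \<open>q > 2\<close> \<alpha> by (simp add: D_def)
    moreover have "a1_integral (1 - \<alpha>) x
                     \<le> - 1/24 * x powr (1 - \<alpha>) + 1/12 * (q powr (1 - \<alpha>) - x powr (1 - \<alpha>))"
      using a1_integral_le[of x "1 - \<alpha>"] \<open>q > 2\<close> \<alpha> by (simp add: q_def)
    moreover have "q powr (1 - \<alpha>) - x powr (1 - \<alpha>) \<le> D / 2"
      using powr_ge_tangent[of q x "1 - \<alpha>"] \<open>q > 2\<close> \<open>x > 0\<close> \<alpha>
      by (simp add: D_def q_def field_simps)
    moreover have "0 < x powr (1 - \<alpha>)" "0 \<le> D"
      using \<open>x > 0\<close> \<open>q > 2\<close> \<alpha> by (simp_all add: D_def)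
    ultimately show ?thesis
      by argo
  qed
  then show ?thesis
    using coef_c_pred_eq[of k \<alpha> \<tau>, folded x_def, folded q_def] coef_c_interior_eq[of "k - 2" k \<alpha> \<tau>, unfolded a b]
      assms \<tau>
    by simp
qed

lemma coef_c_interior_lt:
  assumes "1 \<le> l" "l + 3 \<le> k"
  shows "coef_c \<alpha> \<tau> k (l + 1) < coef_c \<alpha> \<tau> k l"
proof -
  define y where "y = real l + sig \<alpha> + 1/2"
  have "y > 1"
    using assms sig_bounds[OF \<alpha>] by (simp add: y_def)
  have a: "real l + sig \<alpha> + 3/2 = y + 1" "real (l + 1) + sig \<alpha> + 3/2 = y + 2"
    and b: "real l + sig \<alpha> + 1/2 = y" "real (l + 1) + sig \<alpha> + 1/2 = y + 1"
    by (simp_all add: y_def)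
  have "(\<alpha> - 1) * (y + 2) powr (- \<alpha>)
          \<le> (a_integral (1 - \<alpha>) (y + 1) + b_integral (1 - \<alpha>) y)
             - (a_integral (1 - \<alpha>) (y + 2) + b_integral (1 - \<alpha>) (y + 1))"
    using a_b_integral_second_difference_ge[of y "1 - \<alpha>"] \<open>y > 1\<close> \<alpha> by simp
  moreover have "0 < (\<alpha> - 1) * (y + 2) powr (- \<alpha>)"
    using \<alpha> \<open>y > 1\<close> by simp
  ultimately show ?thesis
    using coef_c_interior_eq[of l k \<alpha> \<tau>, unfolded a b] coef_c_interior_eq[of "l + 1" k \<alpha> \<tau>, unfolded a b]
      assms \<tau>
    by simp
qed

lemma coef_c_strict_decreasing:
  assumes "l < k"
  shows "coef_c \<alpha> \<tau> k (l + 1) < coef_c \<alpha> \<tau> k l"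
proof -
  consider "l + 1 = k" | "l = 0" "k \<ge> 2" | "l \<ge> 1" "l + 2 = k" | "l \<ge> 1" "l + 3 \<le> k"
    using assms by linarith
  then show ?thesis
  proof cases
    case 1
    then show ?thesis
      using coef_c_last_lt[of "l + 1"] by auto
  next
    case 2
    then show ?thesis
      using coef_c_1_lt_0[of k] by simp
  next
    case 3
    then show ?thesis
      using coef_c_pred_lt[of "l + 2"] by auto
  next
    case 4
    then show ?thesis
      by (rule coef_c_interior_lt)
  qed
qed

lemma coef_c_0_1_weighted_gt:
  assumes "k \<ge> 1"
  shows "(1 + 2 * sig \<alpha>) * coef_c \<alpha> \<tau> k 1 < 4 * sig \<alpha> * coef_c \<alpha> \<tau> k 0"
proof -
  define V where "V = \<tau> powr (2 - \<alpha>) * (sig \<alpha> + 1/2) powr (1 - \<alpha>)"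
  have "0 < V" "0 < sig \<alpha>" "sig \<alpha> < 1/2"
    using \<tau> sig_bounds[OF \<alpha>] by (simp_all add: V_def)
  have b_last: "4 * sig \<alpha> * coef_b \<alpha> \<tau> k k = (1 + 2 * sig \<alpha>) * V"
    using \<open>0 < sig \<alpha>\<close> by (simp add: coef_b_last_eq'[OF \<alpha>] V_def field_simps)
  show ?thesis
  proof (cases "k = 1")
    case True
    have arg: "real 1 + sig \<alpha> - 1/2 = sig \<alpha> + 1/2"
      by simp
    have a: "- 1/4 * V \<le> coef_a \<alpha> \<tau> 1 1" and c: "coef_c \<alpha> \<tau> 1 1 \<le> 9/16 * V"
      using coef_a_1_ge[of 1, unfolded arg] coef_c_last_le[of 1, unfolded arg]
      by (simp_all add: V_def)
    have "(1 + 2 * sig \<alpha>) * coef_c \<alpha> \<tau> 1 1 \<le> (1 + 2 * sig \<alpha>) * (9/16 * V)"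
      using c \<open>0 < sig \<alpha>\<close> by (intro mult_left_mono) auto
    also have "\<dots> < 4 * sig \<alpha> * (- 1/4 * V) + (1 + 2 * sig \<alpha>) * V"
      using \<open>0 < V\<close> \<open>sig \<alpha> < 1/2\<close> by (simp add: algebra_simps)
    also have "\<dots> \<le> 4 * sig \<alpha> * coef_a \<alpha> \<tau> 1 1 + 4 * sig \<alpha> * coef_b \<alpha> \<tau> 1 1"
      using \<open>0 < sig \<alpha>\<close> mult_left_mono[OF a, of "4 * sig \<alpha>"] b_last True by simp
    also have "\<dots> = 4 * sig \<alpha> * coef_c \<alpha> \<tau> 1 0"
      using coef_c_eq[of 0 1 \<alpha> \<tau>] by (simp add: distrib_left)
    finally show ?thesis
      using True by simp
  next
    case False
    then have "(1 + 2 * sig \<alpha>) * coef_c \<alpha> \<tau> k 1 < (1 + 2 * sig \<alpha>) * V"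
      using coef_c_1_lt[of k] assms \<open>0 < sig \<alpha>\<close> by (simp add: V_def)
    moreover have "4 * sig \<alpha> * coef_b \<alpha> \<tau> k k \<le> 4 * sig \<alpha> * coef_c \<alpha> \<tau> k 0"
      using coef_b_last_le_coef_c_0[of k] False assms \<open>0 < sig \<alpha>\<close> by simp
    ultimately show ?thesis
      using b_last by linarith
  qed
qed

lemma coef_c_1_0_le:
  "coef_c \<alpha> \<tau> 1 0
     \<le> \<tau> powr (2 - \<alpha>) * (1/8 * (sig \<alpha> + 1/2) powr (1 - \<alpha>) + (sig \<alpha> + 1/2) powr (2 - \<alpha>) / (2 - \<alpha>))"
proof -
  have arg: "real 1 + sig \<alpha> - 1/2 = sig \<alpha> + 1/2"
    by simp
  show ?thesis
    using coef_a_1_le[of 1, unfolded arg] coef_b_last_eq[OF \<alpha>, of \<tau> 1] coef_c_eq[of 0 1 \<alpha> \<tau>]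
    by (simp add: algebra_simps)
qed

lemma coef_c_pred_le_primitive:
  assumes "m \<ge> 2"
  defines "q \<equiv> real m + sig \<alpha> - 1/2"
  shows "coef_c \<alpha> \<tau> m (m - 1)
           \<le> 9/8 * \<tau> powr (2 - \<alpha>) * ((q powr (2 - \<alpha>) - (q - 1) powr (2 - \<alpha>)) / (2 - \<alpha>))"
proof -
  define J where "J = (q powr (2 - \<alpha>) - (q - 1) powr (2 - \<alpha>)) / (2 - \<alpha>)"
  have "q > 1"
    using assms sig_bounds[OF \<alpha>] by (simp add: q_def)
  have b_le: "b_integral (1 - \<alpha>) q \<le> J"
    using b_integral_le_primitive[of q "1 - \<alpha>"] \<open>q > 1\<close> \<alpha> by (simp add: J_def)
  moreover have "q powr (1 - \<alpha>) \<le> J"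
    using b_integral_ge[of q "1 - \<alpha>"] b_le \<open>q > 1\<close> \<alpha> by simp
  moreover have arg: "real m + sig \<alpha> - real 1 + 1/2 = q"
    by (simp add: q_def)
  ultimately have a: "coef_a \<alpha> \<tau> m 1 \<le> \<tau> powr (2 - \<alpha>) * (1/8 * J)"
    and b: "coef_b \<alpha> \<tau> m 1 \<le> \<tau> powr (2 - \<alpha>) * J"
    using coef_a_1_le[of m, folded q_def] coef_b_eq[of 1 m \<alpha> \<tau>, unfolded arg] assms \<tau>
    by (auto intro: order.trans mult_left_mono)
  have "coef_c \<alpha> \<tau> m (m - 1) = coef_a \<alpha> \<tau> m 1 + coef_b \<alpha> \<tau> m 1"
    using coef_c_eq[of "m - 1" m \<alpha> \<tau>] assms by simp
  with a b have "coef_c \<alpha> \<tau> m (m - 1) \<le> \<tau> powr (2 - \<alpha>) * (1/8 * J) + \<tau> powr (2 - \<alpha>) * J"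
    by linarith
  then show ?thesis
    unfolding J_def [symmetric] by (simp add: algebra_simps)
qed

lemma sum_coef_c_pred_le:
  assumes "k \<ge> 1"
  shows "(\<Sum>m=1..k. coef_c \<alpha> \<tau> m (m - 1))
           \<le> \<tau> powr (2 - \<alpha>) * (1/8 * (sig \<alpha> + 1/2) powr (1 - \<alpha>)
                + 9/8 * ((real k + sig \<alpha> - 1/2) powr (2 - \<alpha>) / (2 - \<alpha>)))"
  using assms
proof (induction k rule: nat_induct_at_least)
  case base
  define X where "X = (sig \<alpha> + 1/2) powr (2 - \<alpha>) / (2 - \<alpha>)"
  have "0 \<le> X"
    using \<alpha> by (simp add: X_def)
  then have "\<tau> powr (2 - \<alpha>) * (1/8 * (sig \<alpha> + 1/2) powr (1 - \<alpha>) + X)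
      \<le> \<tau> powr (2 - \<alpha>) * (1/8 * (sig \<alpha> + 1/2) powr (1 - \<alpha>) + 9/8 * X)"
    using \<tau> by (intro mult_left_mono) auto
  moreover have arg: "real 1 + sig \<alpha> - 1/2 = sig \<alpha> + 1/2"
    by simp
  ultimately show ?case
    unfolding arg using coef_c_1_0_le[folded X_def] by (simp add: X_def)
next
  case (Suc k)
  have "real (Suc k) + sig \<alpha> - 1/2 - 1 = real k + sig \<alpha> - 1/2"
    by simp
  then have "coef_c \<alpha> \<tau> (Suc k) k
      \<le> 9/8 * \<tau> powr (2 - \<alpha>)
         * (((real (Suc k) + sig \<alpha> - 1/2) powr (2 - \<alpha>) - (real k + sig \<alpha> - 1/2) powr (2 - \<alpha>))
            / (2 - \<alpha>))"
    using coef_c_pred_le_primitive[of "Suc k"] Suc.hyps by simp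
  with Suc.IH show ?case
    by (simp add: algebra_simps diff_divide_distrib)
qed

end

lemma sig_half_powr_le_two:
  assumes "1 < \<alpha>" "\<alpha> < 2"
  shows "(sig \<alpha> + 1/2) powr (1 - \<alpha>) \<le> 2"
proof -
  have "(sig \<alpha> + 1/2) powr (1 - \<alpha>) \<le> (1/2) powr (1 - \<alpha>)"
    using assms sig_bounds[OF assms] by (intro powr_mono2') auto
  also have "\<dots> = 2 powr (\<alpha> - 1)"
    by (simp add: powr_divide flip: powr_minus_divide)
  also have "\<dots> \<le> 2 powr 1"
    using assms by (intro powr_mono) auto
  finally show ?thesis
    by simp
qed

lemma quarter_add_nine_sixteenths_div_lt:
  fixes \<sigma> :: real
  assumes "0 < \<sigma>" "\<sigma> < 1/2"
  shows "1/4 + 9 / (16 * \<sigma>) < (8 * \<sigma> + 21) / (16 * (1 + 2 * \<sigma>) * \<sigma>)"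
proof -
  have "\<sigma> * \<sigma> < 1/2 * \<sigma>"
    using assms by (intro mult_strict_right_mono) auto
  moreover have "(4 * \<sigma> + 9) * (1 + 2 * \<sigma>) = 8 * (\<sigma> * \<sigma>) + 22 * \<sigma> + 9"
    by (simp add: algebra_simps)
  ultimately have "(4 * \<sigma> + 9) * (1 + 2 * \<sigma>) < 8 * \<sigma> + 21"
    using assms by linarith
  then have "\<sigma> * ((4 * \<sigma> + 9) * (1 + 2 * \<sigma>)) < \<sigma> * (8 * \<sigma> + 21)"
    using assms by simp
  moreover have "0 < 16 * \<sigma>" "0 < 16 * (1 + 2 * \<sigma>) * \<sigma>"
    using assms by simp_all
  ultimately show ?thesis
    by (simp add: field_simps)
qed

lemma sum_coef_c_pred_lt:
  assumes \<alpha>: "1 < \<alpha>" "\<alpha> < 2" and "T > 0" "1 \<le> k" "k \<le> N"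
  defines "\<sigma> \<equiv> sig \<alpha>"
  shows "(\<Sum>m=1..k. coef_c \<alpha> (T / real N) m (m - 1))
           < (8 * \<sigma> + 21) * T powr (2 - \<alpha>) / (16 * (1 + 2 * \<sigma>) * \<sigma>)"
proof -
  define \<tau> where "\<tau> = T / real N"
  have "0 < \<sigma>" "\<sigma> < 1/2" "2 - \<alpha> = 2 * \<sigma>"
    using sig_bounds[OF \<alpha>] two_minus_eq_sig[of \<alpha>] by (simp_all add: \<sigma>_def)
  have "\<tau> > 0" "\<tau> \<le> T" "\<tau> * real N = T"
    using assms by (auto simp: \<tau>_def field_simps)
  have f: "\<tau> powr (2 - \<alpha>) * (\<sigma> + 1/2) powr (1 - \<alpha>) \<le> 2 * T powr (2 - \<alpha>)"
    using sig_half_powr_le_two[OF \<alpha>] \<open>\<tau> > 0\<close> \<open>\<tau> \<le> T\<close> \<alpha> unfolding \<sigma>_def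
    by (subst mult.commute, intro mult_mono powr_mono2) auto
  have "\<tau> powr (2 - \<alpha>) * (real k + \<sigma> - 1/2) powr (2 - \<alpha>)
          \<le> \<tau> powr (2 - \<alpha>) * real N powr (2 - \<alpha>)"
    using assms \<open>\<tau> > 0\<close> \<open>\<sigma> < 1/2\<close> \<open>0 < \<sigma>\<close> by (intro mult_left_mono powr_mono2) auto
  also have "\<dots> = T powr (2 - \<alpha>)"
    using \<open>\<tau> > 0\<close> assms by (simp flip: powr_mult \<open>\<tau> * real N = T\<close>)
  finally have q: "\<tau> powr (2 - \<alpha>) * (real k + \<sigma> - 1/2) powr (2 - \<alpha>) \<le> T powr (2 - \<alpha>)" .
  have "(\<Sum>m=1..k. coef_c \<alpha> \<tau> m (m - 1))
      \<le> \<tau> powr (2 - \<alpha>)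
         * (1/8 * (\<sigma> + 1/2) powr (1 - \<alpha>) + 9/8 * ((real k + \<sigma> - 1/2) powr (2 - \<alpha>) / (2 - \<alpha>)))"
    using sum_coef_c_pred_le[OF \<alpha> \<open>\<tau> > 0\<close> \<open>1 \<le> k\<close>] by (simp add: \<sigma>_def)
  also have "\<dots> = 1/8 * (\<tau> powr (2 - \<alpha>) * (\<sigma> + 1/2) powr (1 - \<alpha>))
      + 9 / (16 * \<sigma>) * (\<tau> powr (2 - \<alpha>) * (real k + \<sigma> - 1/2) powr (2 - \<alpha>))"
    unfolding \<open>2 - \<alpha> = 2 * \<sigma>\<close> by (simp add: field_simps)
  also have "\<dots> \<le> 1/8 * (2 * T powr (2 - \<alpha>)) + 9 / (16 * \<sigma>) * T powr (2 - \<alpha>)"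
    using f q \<open>0 < \<sigma>\<close> by (intro add_mono mult_left_mono) auto
  also have "\<dots> = T powr (2 - \<alpha>) * (1/4 + 9 / (16 * \<sigma>))"
    by (simp add: algebra_simps)
  also have "\<dots> < T powr (2 - \<alpha>) * ((8 * \<sigma> + 21) / (16 * (1 + 2 * \<sigma>) * \<sigma>))"
    using quarter_add_nine_sixteenths_div_lt[OF \<open>0 < \<sigma>\<close> \<open>\<sigma> < 1/2\<close>] \<open>T > 0\<close> by (intro mult_strict_left_mono) auto
  finally show ?thesis
    by (simp add: \<tau>_def mult.commute)
qed

lemma coef_c_last_sq_le:
  assumes \<alpha>: "1 < \<alpha>" "\<alpha> < 2" and "\<tau> > 0" "m \<ge> 1"
  shows "(coef_c \<alpha> \<tau> m m)\<^sup>2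
           \<le> 81/256 * \<tau> powr (4 - 2 * \<alpha>) * (real m + sig \<alpha> - 1/2) powr (2 - 2 * \<alpha>)"
proof -
  have "0 \<le> 3 * (real m + sig \<alpha>) powr (1 - \<alpha>) / 8 * \<tau> powr (2 - \<alpha>)"
    by simp
  then have "0 \<le> coef_c \<alpha> \<tau> m m"
    using coef_c_last_gt[OF \<alpha> \<open>\<tau> > 0\<close> \<open>m \<ge> 1\<close>] by linarith
  then have "(coef_c \<alpha> \<tau> m m)\<^sup>2
      \<le> (9/16 * (\<tau> powr (2 - \<alpha>) * (real m + sig \<alpha> - 1/2) powr (1 - \<alpha>)))\<^sup>2"
    using coef_c_last_le[OF \<alpha> \<open>\<tau> > 0\<close> \<open>m \<ge> 1\<close>] by (intro power_mono)
  also have "\<dots> = 81/256 * \<tau> powr (4 - 2 * \<alpha>) * (real m + sig \<alpha> - 1/2) powr (2 - 2 * \<alpha>)"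
    by (simp add: power2_eq_square power_mult_distrib flip: powr_add)
  finally show ?thesis .
qed

lemma sum_coef_c_last_sq_le_const:
  assumes \<alpha>: "1 < \<alpha>" "\<alpha> \<le> 3/2" and "T > 0" "1 \<le> k" "k \<le> N"
  shows "(\<Sum>m=1..k. (coef_c \<alpha> (T / real N) m m)\<^sup>2)
           \<le> 81/256 * (sig \<alpha> + 1/2) powr (2 - 2 * \<alpha>) * T powr (4 - 2 * \<alpha>)"
proof -
  define \<tau> where "\<tau> = T / real N"
  define P where "P = (sig \<alpha> + 1/2) powr (2 - 2 * \<alpha>)"
  have "\<tau> > 0" "\<tau> \<le> T" "\<tau> * real N = T"
    using assms by (auto simp: \<tau>_def field_simps)
  have "(coef_c \<alpha> \<tau> m m)\<^sup>2 \<le> 81/256 * \<tau> powr (4 - 2 * \<alpha>) * P" if "m \<in> {1..k}" for m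
  proof -
    have "(real m + sig \<alpha> - 1/2) powr (2 - 2 * \<alpha>) \<le> P"
      unfolding P_def using that \<alpha> sig_bounds[of \<alpha>] by (intro powr_mono2') auto
    then have "81/256 * \<tau> powr (4 - 2 * \<alpha>) * (real m + sig \<alpha> - 1/2) powr (2 - 2 * \<alpha>)
        \<le> 81/256 * \<tau> powr (4 - 2 * \<alpha>) * P"
      by (rule mult_left_mono) simp
    moreover have "(coef_c \<alpha> \<tau> m m)\<^sup>2
        \<le> 81/256 * \<tau> powr (4 - 2 * \<alpha>) * (real m + sig \<alpha> - 1/2) powr (2 - 2 * \<alpha>)"
      using coef_c_last_sq_le[of \<alpha> \<tau> m] that \<alpha> \<open>\<tau> > 0\<close> by simp
    ultimately show ?thesis
      by linarith
  qed
  then have "(\<Sum>m=1..k. (coef_c \<alpha> \<tau> m m)\<^sup>2) \<le> (\<Sum>m=1..k. 81/256 * \<tau> powr (4 - 2 * \<alpha>) * P)"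
    by (rule sum_mono)
  also have "\<dots> = real k * (81/256 * \<tau> powr (4 - 2 * \<alpha>) * P)"
    by simp
  also have "\<dots> \<le> real N * (81/256 * \<tau> powr (4 - 2 * \<alpha>) * P)"
    using assms by (intro mult_right_mono) (auto simp: P_def)
  also have "\<dots> = 81/256 * P * (\<tau> powr (3 - 2 * \<alpha>) * T)"
  proof -
    have "\<tau> powr (4 - 2 * \<alpha>) = \<tau> * \<tau> powr (3 - 2 * \<alpha>)"
      using powr_mult_base[of \<tau> "3 - 2 * \<alpha>"] \<open>\<tau> > 0\<close> by simp
    then show ?thesis
      unfolding \<open>\<tau> * real N = T\<close> [symmetric] by (simp add: algebra_simps)
  qed
  also have "\<dots> \<le> 81/256 * P * (T powr (3 - 2 * \<alpha>) * T)"
    using \<alpha> \<open>\<tau> > 0\<close> \<open>\<tau> \<le> T\<close> \<open>T > 0\<close>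
    by (intro mult_left_mono mult_right_mono powr_mono2) (auto simp: P_def)
  also have "\<dots> = 81/256 * P * T powr (4 - 2 * \<alpha>)"
    using powr_mult_base[of T "3 - 2 * \<alpha>"] \<open>T > 0\<close> by (simp add: algebra_simps)
  finally show ?thesis
    by (simp add: \<tau>_def P_def)
qed

lemma sum_coef_c_last_sq_le_tau_powr:
  assumes \<alpha>: "3/2 < \<alpha>" "\<alpha> < 2" and "\<tau> > 0"
  shows "(\<Sum>m=1..k. (coef_c \<alpha> \<tau> m m)\<^sup>2)
           \<le> 81/256 * 2 powr (2 * \<alpha> - 2) * (\<Sum>n. real n powr (2 - 2 * \<alpha>)) * \<tau> powr (4 - 2 * \<alpha>)"
proof -
  define K where "K = 81/256 * 2 powr (2 * \<alpha> - 2) * \<tau> powr (4 - 2 * \<alpha>)"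
  have "K \<ge> 0"
    by (simp add: K_def)
  have "(coef_c \<alpha> \<tau> m m)\<^sup>2 \<le> K * real m powr (2 - 2 * \<alpha>)" if "m \<in> {1..k}" for m
  proof -
    have "(real m + sig \<alpha> - 1/2) powr (2 - 2 * \<alpha>) \<le> (real m / 2) powr (2 - 2 * \<alpha>)"
      using that \<alpha> sig_bounds[of \<alpha>] by (intro powr_mono2') auto
    also have "\<dots> = real m powr (2 - 2 * \<alpha>) / 2 powr (2 - 2 * \<alpha>)"
      by (simp add: powr_divide)
    also have "\<dots> = 2 powr (2 * \<alpha> - 2) * real m powr (2 - 2 * \<alpha>)"
      using powr_minus_divide[of 2 "2 - 2 * \<alpha>"] by simp
    finally have "81/256 * \<tau> powr (4 - 2 * \<alpha>) * (real m + sig \<alpha> - 1/2) powr (2 - 2 * \<alpha>)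
        \<le> 81/256 * \<tau> powr (4 - 2 * \<alpha>) * (2 powr (2 * \<alpha> - 2) * real m powr (2 - 2 * \<alpha>))"
      by (rule mult_left_mono) simp
    also have "\<dots> = K * real m powr (2 - 2 * \<alpha>)"
      by (simp add: K_def)
    finally have "81/256 * \<tau> powr (4 - 2 * \<alpha>) * (real m + sig \<alpha> - 1/2) powr (2 - 2 * \<alpha>)
        \<le> K * real m powr (2 - 2 * \<alpha>)" .
    moreover have "(coef_c \<alpha> \<tau> m m)\<^sup>2
        \<le> 81/256 * \<tau> powr (4 - 2 * \<alpha>) * (real m + sig \<alpha> - 1/2) powr (2 - 2 * \<alpha>)"
      using coef_c_last_sq_le[of \<alpha> \<tau> m] that \<alpha> \<open>\<tau> > 0\<close> by simp
    ultimately show ?thesis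
      by linarith
  qed
  then have "(\<Sum>m=1..k. (coef_c \<alpha> \<tau> m m)\<^sup>2) \<le> (\<Sum>m=1..k. K * real m powr (2 - 2 * \<alpha>))"
    by (rule sum_mono)
  also have "\<dots> = K * (\<Sum>m=1..k. real m powr (2 - 2 * \<alpha>))"
    by (simp add: sum_distrib_left)
  also have "\<dots> \<le> K * (\<Sum>n. real n powr (2 - 2 * \<alpha>))"
    using \<alpha> \<open>K \<ge> 0\<close> by (intro mult_left_mono sum_le_suminf) (auto simp: summable_real_powr_iff)
  finally show ?thesis
    by (simp add: K_def algebra_simps)
qed

definition square_sum_rate :: "real \<Rightarrow> real \<Rightarrow> real \<Rightarrow> real" where
  "square_sum_rate \<alpha> T \<tau> =
     (let \<sigma> = sig \<alpha> in
      if \<alpha> < 3/2 then (1 + \<sigma>)\<^sup>2 * T powr (3 - 2 * \<alpha>) / (3 - 2 * \<alpha>) * \<tau> + (1 + \<sigma>) powr (4 - 2 * \<alpha>)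
      else if \<alpha> = 3/2 then (1 + \<sigma>) * T
      else (2 - 3 * \<sigma>) / (2 * \<alpha> - 3) * (1 + \<sigma>) powr (4 - 2 * \<alpha>) * \<tau> powr (4 - 2 * \<alpha>))"

lemma sum_coef_c_last_sq_le_rate_low:
  assumes \<alpha>: "1 < \<alpha>" "\<alpha> \<le> 3/2" and "T > 0"
  shows "\<exists>K>0. \<forall>N k. 1 \<le> k \<longrightarrow> k \<le> N \<longrightarrow>
           (\<Sum>m=1..k. (coef_c \<alpha> (T / real N) m m)\<^sup>2) \<le> K * square_sum_rate \<alpha> T (T / real N)"
proof -
  define R where "R = (if \<alpha> < 3/2 then (1 + sig \<alpha>) powr (4 - 2 * \<alpha>) else (1 + sig \<alpha>) * T)"
  define M where "M = 81/256 * (sig \<alpha> + 1/2) powr (2 - 2 * \<alpha>) * T powr (4 - 2 * \<alpha>)"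
  have "R > 0" "M \<ge> 0"
    using sig_bounds[of \<alpha>] \<alpha> \<open>T > 0\<close> by (simp_all add: R_def M_def)
  have "(\<Sum>m=1..k. (coef_c \<alpha> (T / real N) m m)\<^sup>2) \<le> (M + 1) / R * square_sum_rate \<alpha> T (T / real N)"
    if "1 \<le> k" "k \<le> N" for N k
  proof -
    have "(\<Sum>m=1..k. (coef_c \<alpha> (T / real N) m m)\<^sup>2) \<le> M"
      unfolding M_def using sum_coef_c_last_sq_le_const that \<alpha> \<open>T > 0\<close> by blast
    also have "\<dots> \<le> (M + 1) / R * R"
      using \<open>R > 0\<close> by simp
    also have "R \<le> square_sum_rate \<alpha> T (T / real N)"
      using \<alpha> \<open>T > 0\<close> by (auto simp: R_def square_sum_rate_def Let_def)
    then have "(M + 1) / R * R \<le> (M + 1) / R * square_sum_rate \<alpha> T (T / real N)"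
      using \<open>R > 0\<close> \<open>M \<ge> 0\<close> by (intro mult_left_mono) auto
    finally show ?thesis .
  qed
  moreover have "(M + 1) / R > 0"
    using \<open>R > 0\<close> \<open>M \<ge> 0\<close> by simp
  ultimately show ?thesis
    by blast
qed

lemma sum_coef_c_last_sq_le_rate_high:
  assumes \<alpha>: "3/2 < \<alpha>" "\<alpha> < 2" and "T > 0"
  shows "\<exists>K>0. \<forall>N k. 1 \<le> k \<longrightarrow> k \<le> N \<longrightarrow>
           (\<Sum>m=1..k. (coef_c \<alpha> (T / real N) m m)\<^sup>2) \<le> K * square_sum_rate \<alpha> T (T / real N)"
proof -
  define E where "E = (2 - 3 * sig \<alpha>) / (2 * \<alpha> - 3) * (1 + sig \<alpha>) powr (4 - 2 * \<alpha>)"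
  define M where "M = 81/256 * 2 powr (2 * \<alpha> - 2) * (\<Sum>n. real n powr (2 - 2 * \<alpha>))"
  have "E > 0"
    using sig_bounds[of \<alpha>] \<alpha> by (simp add: E_def)
  have "(\<Sum>n. real n powr (2 - 2 * \<alpha>)) \<ge> 0"
    using \<alpha> by (intro suminf_nonneg) (auto simp: summable_real_powr_iff)
  then have "M \<ge> 0"
    by (simp add: M_def)
  have "(\<Sum>m=1..k. (coef_c \<alpha> (T / real N) m m)\<^sup>2) \<le> (M + 1) / E * square_sum_rate \<alpha> T (T / real N)"
    if "1 \<le> k" "k \<le> N" for N k
  proof -
    have "T / real N > 0"
      using that \<open>T > 0\<close> by simp
    then have "(\<Sum>m=1..k. (coef_c \<alpha> (T / real N) m m)\<^sup>2) \<le> M * (T / real N) powr (4 - 2 * \<alpha>)"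
      using sum_coef_c_last_sq_le_tau_powr[of \<alpha> "T / real N" k] \<alpha> by (simp add: M_def)
    also have "\<dots> \<le> (M + 1) * (T / real N) powr (4 - 2 * \<alpha>)"
      by (intro mult_right_mono) auto
    also have "\<dots> = (M + 1) / E * (E * (T / real N) powr (4 - 2 * \<alpha>))"
      using \<open>E > 0\<close> by simp
    also have "E * (T / real N) powr (4 - 2 * \<alpha>) = square_sum_rate \<alpha> T (T / real N)"
      using \<alpha> by (simp add: E_def square_sum_rate_def Let_def)
    finally show ?thesis .
  qed
  moreover have "(M + 1) / E > 0"
    using \<open>E > 0\<close> \<open>M \<ge> 0\<close> by simp
  ultimately show ?thesis
    by blast
qed

theorem lemma1:
  fixes \<alpha> T :: real
  assumes "1 < \<alpha>" "\<alpha> < 2" "T > 0"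
  shows
   "(\<forall>N::nat. \<forall>k::nat. N \<ge> 1 \<longrightarrow> k \<ge> 1 \<longrightarrow>
       (let \<tau> = T / real N; \<sigma> = sig \<alpha> in
         (\<forall>l<k. coef_c \<alpha> \<tau> k l > coef_c \<alpha> \<tau> k (l + 1)) \<and>
         coef_c \<alpha> \<tau> k k > 3 * (real k + \<sigma>) powr (1 - \<alpha>) / 8 * \<tau> powr (2 - \<alpha>) \<and>
         3 * (real k + \<sigma>) powr (1 - \<alpha>) / 8 * \<tau> powr (2 - \<alpha>) > 0 \<and>
         4 * \<sigma> * coef_c \<alpha> \<tau> k 0 - (1 + 2 * \<sigma>) * coef_c \<alpha> \<tau> k 1 > 0))
    \<and> (\<forall>N::nat. \<forall>k::nat. N \<ge> 1 \<longrightarrow> 1 \<le> k \<longrightarrow> k \<le> N \<longrightarrow>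
       (let \<tau> = T / real N; \<sigma> = sig \<alpha> in
         (\<Sum>m=1..k. coef_c \<alpha> \<tau> m (m - 1))
           < (8 * \<sigma> + 21) * T powr (2 - \<alpha>) / (16 * (1 + 2 * \<sigma>) * \<sigma>)))
    \<and> (\<exists>C>0. \<forall>N::nat. \<forall>k::nat. N \<ge> 1 \<longrightarrow> 1 \<le> k \<longrightarrow> k \<le> N \<longrightarrow>
       (let \<tau> = T / real N; \<sigma> = sig \<alpha> in
         (\<Sum>m=1..k. (coef_c \<alpha> \<tau> m m)\<^sup>2)
           \<le> 9 * C / (16 * (1 + 2 * \<sigma>)\<^sup>2) *
              (if \<alpha> < 3/2 then
                 (1 + \<sigma>)\<^sup>2 * T powr (3 - 2 * \<alpha>) / (3 - 2 * \<alpha>) * \<tau> + (1 + \<sigma>) powr (4 - 2 * \<alpha>)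
               else if \<alpha> = 3/2 then (1 + \<sigma>) * T
               else (2 - 3 * \<sigma>) / (2 * \<alpha> - 3) * (1 + \<sigma>) powr (4 - 2 * \<alpha>) * \<tau> powr (4 - 2 * \<alpha>))))"
  apply (intro conjI allI impI)
  subgoal for N k
  proof -
    assume "N \<ge> 1" "k \<ge> 1"
    then have \<tau>: "T / real N > 0"
      using assms by simp
    have "0 < 3 * (real k + sig \<alpha>) powr (1 - \<alpha>) / 8 * (T / real N) powr (2 - \<alpha>)"
      using \<tau> \<open>N \<ge> 1\<close> sig_bounds[OF assms(1,2)] by (intro mult_pos_pos) auto
    then show ?thesis
      using coef_c_strict_decreasing[OF assms(1,2) \<tau>] coef_c_last_gt[OF assms(1,2) \<tau> \<open>k \<ge> 1\<close>]
        coef_c_0_1_weighted_gt[OF assms(1,2) \<tau> \<open>k \<ge> 1\<close>]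
      by (simp add: Let_def mult.commute)
  qed
  subgoal for N k
    using sum_coef_c_pred_lt[OF assms] by (simp add: Let_def)
  subgoal
  proof -
    obtain K where "K > 0" and K: "\<And>N k. 1 \<le> k \<Longrightarrow> k \<le> N \<Longrightarrow>
        (\<Sum>m=1..k. (coef_c \<alpha> (T / real N) m m)\<^sup>2) \<le> K * square_sum_rate \<alpha> T (T / real N)"
      using sum_coef_c_last_sq_le_rate_low[of \<alpha> T] sum_coef_c_last_sq_le_rate_high[of \<alpha> T] assms
      by (cases "\<alpha> \<le> 3/2") auto
    have "0 < 16 * (1 + 2 * sig \<alpha>)\<^sup>2"
      using sig_bounds[OF assms(1,2)] by simp
    then show ?thesis
      using \<open>K > 0\<close> K by (intro exI[of _ "K * (16 * (1 + 2 * sig \<alpha>)\<^sup>2) / 9"])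
        (simp add: square_sum_rate_def Let_def)
  qed
  done

end
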